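(* For every $h\in\mathbb Z$, the set of $\theta\in M\cap C^\infty([0,2\pi])$ such that $s\mapsto\theta(s)-hs$ extends to a smooth $2\pi$-periodic function on $\mathbb R$ (i.e. the direction functions of smooth closed curves with rotation index $h$) is dense in $M\setminus Z$ with respect to the $L^2$ norm.
   Context: $L^2=L^2([0,2\pi];\mathbb R)$. $\phi_1(\theta)=\int_0^{2\pi}\theta$, $\phi_2(\theta)=\int_0^{2\pi}\cos\theta$, $\phi_3(\theta)=\int_0^{2\pi}\sin\theta$, $M=\{\theta\in L^2:(\phi_1,\phi_2,\phi_3)(\theta)=(2\pi^2,0,0)\}$. A $\theta\in M$ represents the closed curve $\xi(s)=\int_0^s(\cos\theta(t),\sin\theta(t))\,dt$. $Z$ is the set of $\theta\in M$ with $\theta(s)-\alpha\in\pi\mathbb Z$ a.e. for some constant $\alpha$. *)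

theory Defs
  imports "HOL-Analysis.Analysis"
begin

definition L2_02pi :: "(real \<Rightarrow> real) set" where
  "L2_02pi = {\<theta>. set_borel_measurable lborel {0..2*pi} \<theta> \<and>
                  set_integrable lborel {0..2*pi} (\<lambda>s. (\<theta> s)\<^sup>2)}"

definition L2_dist :: "(real \<Rightarrow> real) \<Rightarrow> (real \<Rightarrow> real) \<Rightarrow> real" where
  "L2_dist \<theta> \<eta> = sqrt (LINT s:{0..2*pi}|lborel. (\<theta> s - \<eta> s)\<^sup>2)"

definition M_set :: "(real \<Rightarrow> real) set" where
  "M_set = {\<theta> \<in> L2_02pi.
      (LINT s:{0..2*pi}|lborel. \<theta> s) = 2 * pi\<^sup>2 \<and>
      (LINT s:{0..2*pi}|lborel. cos (\<theta> s)) = 0 \<and>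
      (LINT s:{0..2*pi}|lborel. sin (\<theta> s)) = 0}"

definition Z_set :: "(real \<Rightarrow> real) set" where
  "Z_set = {\<theta> \<in> M_set. \<exists>\<alpha>::real.
      AE s in lborel. s \<in> {0..2*pi} \<longrightarrow> (\<exists>k::int. \<theta> s - \<alpha> = of_int k * pi)}"

text \<open>C-infinity functions on the whole real line: there is a sequence of
  functions, starting with g, each the derivative of the previous one.\<close>
definition smooth_real :: "(real \<Rightarrow> real) \<Rightarrow> bool" where
  "smooth_real g \<longleftrightarrow> (\<exists>D :: nat \<Rightarrow> real \<Rightarrow> real. D 0 = g \<and>
      (\<forall>n x. (D n has_real_derivative D (Suc n) x) (at x)))"

definition smooth_index_set :: "int \<Rightarrow> (real \<Rightarrow> real) set" where
  "smooth_index_set h = {\<theta> \<in> M_set. \<exists>g. smooth_real g \<and> (\<forall>x. g (x + 2*pi) = g x) \<and>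
      (\<forall>s\<in>{0..2*pi}. \<theta> s - of_int h * s = g s)}"

end

theory Submission
  imports Defs
begin

text \<open>Write \<open>\<theta> s = h * s + u s\<close> with \<open>u\<close> square integrable and approximate \<open>u\<close> in \<open>L\<^sup>2\<close> by a
  trigonometric polynomial \<open>g\<close>: these are dense, by Stone-Weierstrass on the circle for continuous
  periodic functions, Urysohn's lemma and outer regularity for indicators, and simple functions for
  the rest. The smooth function \<open>\<psi> s = h * s + g s\<close> has rotation index \<open>h\<close>, but violates the
  constraints slightly. The constraint map \<open>F \<eta> = (\<integral>\<eta>, \<integral>cis \<eta>)\<close> has the derivative
  \<open>w \<mapsto> (\<integral>w, \<integral>\<i> w cis \<theta>)\<close> at \<open>\<theta>\<close>; unless \<open>1\<close>, \<open>cos \<theta>\<close> and \<open>sin \<theta>\<close> are linearly dependent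
  almost everywhere, i.e. unless \<open>\<theta> \<in> Z\<close>, it is onto already on trigonometric polynomials and so has a
  bounded linear right inverse \<open>\<tau>\<close>. Brouwer's fixed point theorem yields a small \<open>t\<close> with
  \<open>F (\<psi> + \<tau> t) = F \<theta>\<close>, and \<open>\<psi> + \<tau> t\<close> is the required approximation.\<close>

section \<open>Trigonometric polynomials\<close>

inductive_set trig_poly :: "(real \<Rightarrow> real) set" where
  trig_poly_const: "(\<lambda>x. c) \<in> trig_poly"
| trig_poly_cos: "cos \<in> trig_poly"
| trig_poly_sin: "sin \<in> trig_poly"
| trig_poly_add: "f \<in> trig_poly \<Longrightarrow> g \<in> trig_poly \<Longrightarrow> (\<lambda>x. f x + g x) \<in> trig_poly"
| trig_poly_mult: "f \<in> trig_poly \<Longrightarrow> g \<in> trig_poly \<Longrightarrow> (\<lambda>x. f x * g x) \<in> trig_poly"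

lemma trig_poly_cmult: "f \<in> trig_poly \<Longrightarrow> (\<lambda>x. c * f x) \<in> trig_poly"
  by (rule trig_poly_mult[OF trig_poly_const])

lemma trig_poly_sum:
  "finite I \<Longrightarrow> (\<And>i. i \<in> I \<Longrightarrow> f i \<in> trig_poly) \<Longrightarrow> (\<lambda>x. \<Sum>i\<in>I. f i x) \<in> trig_poly"
  by (induction rule: finite_induct) (auto intro: trig_poly.intros)

lemma trig_poly_bounded: "f \<in> trig_poly \<Longrightarrow> \<exists>B. \<forall>x. \<bar>f x\<bar> \<le> B"
proof (induction rule: trig_poly.induct)
  case (trig_poly_add f g)
  then obtain B C where "\<forall>x. \<bar>f x\<bar> \<le> B" "\<forall>x. \<bar>g x\<bar> \<le> C"
    by blast
  then have "\<forall>x. \<bar>f x + g x\<bar> \<le> B + C"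
    by (meson abs_triangle_ineq add_mono order_trans)
  then show ?case ..
next
  case (trig_poly_mult f g)
  then obtain B C where "\<forall>x. \<bar>f x\<bar> \<le> B" "\<forall>x. \<bar>g x\<bar> \<le> C"
    by blast
  then have "\<forall>x. \<bar>f x * g x\<bar> \<le> B * C"
    by (simp add: abs_mult mult_mono')
  then show ?case ..
qed (auto intro: exI[of _ 1])

lemma trig_poly_has_derivative:
  "f \<in> trig_poly \<Longrightarrow> \<exists>f'\<in>trig_poly. \<forall>x. (f has_real_derivative f' x) (at x)"
proof (induction rule: trig_poly.induct)
  case (trig_poly_const c)
  show ?case by (auto intro!: bexI[of _ "\<lambda>x. 0"] trig_poly.intros)
next
  case trig_poly_cos
  show ?case
    by (auto intro!: bexI[of _ "\<lambda>x. (-1) * sin x"] trig_poly.intros derivative_eq_intros)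
next
  case trig_poly_sin
  show ?case by (auto intro!: bexI[of _ cos] trig_poly.intros derivative_eq_intros)
next
  case (trig_poly_add f g)
  then obtain f' g' where "f' \<in> trig_poly" "g' \<in> trig_poly"
    "\<forall>x. (f has_real_derivative f' x) (at x)" "\<forall>x. (g has_real_derivative g' x) (at x)"
    by blast
  then show ?case
    by (auto intro!: bexI[of _ "\<lambda>x. f' x + g' x"] trig_poly.intros derivative_eq_intros)
next
  case (trig_poly_mult f g)
  then obtain f' g' where "f' \<in> trig_poly" "g' \<in> trig_poly"
    "\<forall>x. (f has_real_derivative f' x) (at x)" "\<forall>x. (g has_real_derivative g' x) (at x)"
    by blast
  with trig_poly_mult.hyps show ?case
    by (auto intro!: bexI[of _ "\<lambda>x. f' x * g x + f x * g' x"] trig_poly.intros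
        derivative_eq_intros)
qed

lemma smooth_real_trig_poly:
  assumes "f \<in> trig_poly"
  shows "smooth_real f"
proof -
  have "\<forall>g\<in>trig_poly. \<exists>g'. g' \<in> trig_poly \<and> (\<forall>x. (g has_real_derivative g' x) (at x))"
    using trig_poly_has_derivative by blast
  then obtain d where d: "\<And>g. g \<in> trig_poly \<Longrightarrow>
      d g \<in> trig_poly \<and> (\<forall>x. (g has_real_derivative d g x) (at x))"
    by metis
  have "(d ^^ n) f \<in> trig_poly" for n
    by (induction n) (simp_all add: assms d)
  then show ?thesis
    unfolding smooth_real_def using d by (intro exI[of _ "\<lambda>n. (d ^^ n) f"]) auto
qed

lemma trig_poly_periodic: "f \<in> trig_poly \<Longrightarrow> f (x + 2*pi) = f x"
  by (induction rule: trig_poly.induct) auto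

lemma continuous_on_trig_poly: "f \<in> trig_poly \<Longrightarrow> continuous_on A f"
  by (induction rule: trig_poly.induct) (intro continuous_intros; assumption)+

lemma trig_poly_real_polynomial_function:
  "real_polynomial_function q \<Longrightarrow> (\<lambda>s. q (cis s)) \<in> trig_poly"
proof (induction rule: real_polynomial_function.induct)
  case (linear f)
  then interpret bounded_linear f .
  have "f (cis s) = cos s * f 1 + sin s * f \<i>" for s
  proof -
    have "cis s = cos s *\<^sub>R 1 + sin s *\<^sub>R \<i>"
      by (simp add: complex_eq_iff)
    then show ?thesis
      by (simp only: add scale real_scaleR_def)
  qed
  then show ?case
    by (simp add: trig_poly.intros)
next
  case (const c)
  show ?case by (rule trig_poly_const)
next
  case (add f g)
  then show ?case using trig_poly_add[of "\<lambda>s. f (cis s)" "\<lambda>s. g (cis s)"] by simp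
next
  case (mult f g)
  then show ?case using trig_poly_mult[of "\<lambda>s. f (cis s)" "\<lambda>s. g (cis s)"] by simp
qed

lemma Arg2pi_cis:
  assumes "s \<in> {0..2*pi}"
  shows "Arg2pi (cis s) = (if s = 2*pi then 0 else s)"
proof (cases "s = 2*pi")
  case True
  then show ?thesis
    using Arg2pi_exp[of 0] by simp
next
  case False
  with assms have "Arg2pi (exp (\<i> * of_real s)) = s"
    by (subst Arg2pi_exp) auto
  with False show ?thesis
    by (simp add: cis_conv_exp)
qed

lemma continuous_on_sphere_Arg2pi:
  fixes c :: "real \<Rightarrow> real"
  assumes c: "continuous_on {0..2*pi} c" and periodic: "c 0 = c (2*pi)"
  shows "continuous_on (sphere 0 1) (\<lambda>z. c (Arg2pi z))"
proof -
  let ?X = "top_of_set {0..2*pi}" and ?Y = "top_of_set (sphere (0::complex) 1)"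
  have cis_cont: "continuous_map ?X ?Y cis"
  proof -
    have "continuous_on {0..2*pi} (\<lambda>x. cis x)"
      by (intro continuous_intros)
    then show ?thesis
      by (simp add: continuous_map_in_subtopology)
  qed
  have "cis ` {0..2*pi} = sphere 0 1"
  proof (intro equalityI subsetI)
    fix z :: complex assume "z \<in> sphere 0 1"
    then have "z = cis (Arg2pi z)"
      using Arg2pi_eq[of z] by (simp add: cis_conv_exp)
    then show "z \<in> cis ` {0..2*pi}"
      using Arg2pi_ge_0[of z] Arg2pi_lt_2pi[of z] by (intro image_eqI) auto
  qed auto
  moreover have "closed_map ?X ?Y cis"
    using cis_cont by (intro continuous_imp_closed_map)
      (auto simp: compact_space_subtopology Hausdorff_space_subtopology)
  ultimately have "quotient_map ?X ?Y cis"
    using cis_cont by (intro continuous_closed_imp_quotient_map) auto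
  moreover have "continuous_map ?X euclideanreal ((\<lambda>z. c (Arg2pi z)) \<circ> cis)"
  proof (rule continuous_map_eq)
    show "continuous_map ?X euclideanreal c"
      using c by simp
  qed (auto simp: Arg2pi_cis periodic)
  ultimately have "continuous_map ?Y euclideanreal (\<lambda>z. c (Arg2pi z))"
    by (rule continuous_compose_quotient_map)
  then show ?thesis
    by simp
qed

lemma uniform_approx_trig_poly:
  fixes c :: "real \<Rightarrow> real"
  assumes "continuous_on {0..2*pi} c" "c 0 = c (2*pi)" "e > 0"
  obtains g where "g \<in> trig_poly" "\<And>s. s \<in> {0..2*pi} \<Longrightarrow> \<bar>c s - g s\<bar> < e"
proof -
  obtain P :: "complex \<Rightarrow> real" where P: "polynomial_function P"
    "\<And>z. z \<in> sphere 0 1 \<Longrightarrow> \<bar>c (Arg2pi z) - P z\<bar> < e"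
    using Stone_Weierstrass_polynomial_function[OF compact_sphere
        continuous_on_sphere_Arg2pi[OF assms(1,2)] assms(3)] by auto
  show thesis
  proof
    show "(\<lambda>s. P (cis s)) \<in> trig_poly"
      using P(1) by (intro trig_poly_real_polynomial_function) (simp add: real_polynomial_function_eq)
    show "\<bar>c s - P (cis s)\<bar> < e" if "s \<in> {0..2*pi}" for s
      using P(2)[of "cis s"] that assms(2) by (simp add: Arg2pi_cis split: if_splits)
  qed
qed

section \<open>Approximation in mean square\<close>

definition sq_integrable :: "'a measure \<Rightarrow> ('a \<Rightarrow> real) \<Rightarrow> bool" where
  "sq_integrable M f \<longleftrightarrow> f \<in> borel_measurable M \<and> integrable M (\<lambda>x. (f x)\<^sup>2)"

lemma sq_integrable_add:
  assumes "sq_integrable M f" "sq_integrable M g"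
  shows "sq_integrable M (\<lambda>x. f x + g x)"
  unfolding sq_integrable_def
proof
  have [measurable]: "f \<in> borel_measurable M" "g \<in> borel_measurable M"
    using assms unfolding sq_integrable_def by auto
  show "(\<lambda>x. f x + g x) \<in> borel_measurable M"
    by measurable
  show "integrable M (\<lambda>x. (f x + g x)\<^sup>2)"
  proof (rule Bochner_Integration.integrable_bound)
    show "integrable M (\<lambda>x. 2 * (f x)\<^sup>2 + 2 * (g x)\<^sup>2)"
      using assms unfolding sq_integrable_def by simp
    have "(a + b)\<^sup>2 \<le> 2 * a\<^sup>2 + 2 * b\<^sup>2" for a b :: real
      using sum_squares_ge_zero[of "a - b" 0] by (simp add: power2_eq_square algebra_simps)
    then show "AE x in M. norm ((f x + g x)\<^sup>2) \<le> norm (2 * (f x)\<^sup>2 + 2 * (g x)\<^sup>2)"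
      by simp
  qed measurable
qed

lemma sq_integrable_cmult:
  assumes "sq_integrable M f"
  shows "sq_integrable M (\<lambda>x. c * f x)"
proof -
  have [measurable]: "f \<in> borel_measurable M"
    using assms unfolding sq_integrable_def by simp
  have "(\<lambda>x. c * f x) \<in> borel_measurable M"
    by measurable
  with assms show ?thesis
    unfolding sq_integrable_def by (simp add: power_mult_distrib)
qed

lemma sq_integrable_diff:
  "sq_integrable M f \<Longrightarrow> sq_integrable M g \<Longrightarrow> sq_integrable M (\<lambda>x. f x - g x)"
  using sq_integrable_add[of M f "\<lambda>x. (-1) * g x"] sq_integrable_cmult[of M g "-1"] by simp

lemma integrable_sq_diff:
  "sq_integrable M f \<Longrightarrow> sq_integrable M g \<Longrightarrow> integrable M (\<lambda>x. (f x - g x)\<^sup>2)"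
  using sq_integrable_diff[of M f g] unfolding sq_integrable_def by simp

lemma integrable_mult_sq_integrable:
  assumes "sq_integrable M f" "sq_integrable M g"
  shows "integrable M (\<lambda>x. f x * g x)"
proof (rule Bochner_Integration.integrable_bound)
  have [measurable]: "f \<in> borel_measurable M" "g \<in> borel_measurable M"
    using assms unfolding sq_integrable_def by auto
  show "integrable M (\<lambda>x. (f x)\<^sup>2 + (g x)\<^sup>2)"
    using assms unfolding sq_integrable_def by simp
  show "(\<lambda>x. f x * g x) \<in> borel_measurable M"
    by measurable
  have "\<bar>a * b\<bar> \<le> a\<^sup>2 + b\<^sup>2" for a b :: real
  proof -
    have "2 * (\<bar>a\<bar> * \<bar>b\<bar>) \<le> a\<^sup>2 + b\<^sup>2"
      using sum_squares_ge_zero[of "\<bar>a\<bar> - \<bar>b\<bar>" 0] by (simp add: power2_eq_square algebra_simps)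
    moreover have "0 \<le> \<bar>a\<bar> * \<bar>b\<bar>"
      by simp
    ultimately show ?thesis
      unfolding abs_mult by linarith
  qed
  then show "AE x in M. norm (f x * g x) \<le> norm ((f x)\<^sup>2 + (g x)\<^sup>2)"
    by simp
qed

lemma (in finite_measure) sq_integrable_bounded:
  assumes "f \<in> borel_measurable M" "\<And>x. x \<in> space M \<Longrightarrow> \<bar>f x\<bar> \<le> B"
  shows "sq_integrable M f"
  unfolding sq_integrable_def
proof
  have "(f x)\<^sup>2 \<le> B\<^sup>2" if "x \<in> space M" for x
    using assms(2)[OF that] abs_le_square_iff[of "f x" B] by simp
  then show "integrable M (\<lambda>x. (f x)\<^sup>2)"
    using assms(1) by (intro integrable_const_bound[where B = "B\<^sup>2"] AE_I2) auto
qed fact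

lemma sq_dist_triangle:
  assumes "sq_integrable M u" "sq_integrable M v" "sq_integrable M w"
  shows "(\<integral>x. (u x - w x)\<^sup>2 \<partial>M) \<le> 2 * (\<integral>x. (u x - v x)\<^sup>2 \<partial>M) + 2 * (\<integral>x. (v x - w x)\<^sup>2 \<partial>M)"
proof -
  have uv: "integrable M (\<lambda>x. (u x - v x)\<^sup>2)" and vw: "integrable M (\<lambda>x. (v x - w x)\<^sup>2)"
    and uw: "integrable M (\<lambda>x. (u x - w x)\<^sup>2)"
    using assms by (auto intro: integrable_sq_diff)
  have "(a - c)\<^sup>2 \<le> 2 * (a - b)\<^sup>2 + 2 * (b - c)\<^sup>2" for a b c :: real
    using sum_squares_ge_zero[of "a - 2*b + c" 0] by (simp add: power2_eq_square algebra_simps)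
  then have "(\<integral>x. (u x - w x)\<^sup>2 \<partial>M) \<le> (\<integral>x. 2 * (u x - v x)\<^sup>2 + 2 * (v x - w x)\<^sup>2 \<partial>M)"
    using uv vw by (intro integral_mono[OF uw]) auto
  also have "\<dots> = 2 * (\<integral>x. (u x - v x)\<^sup>2 \<partial>M) + 2 * (\<integral>x. (v x - w x)\<^sup>2 \<partial>M)"
    using uv vw by simp
  finally show ?thesis .
qed

lemma sq_integrable_simple_function_approx:
  assumes f: "sq_integrable M f"
  obtains F where "\<And>i. simple_function M (F i)" "(\<lambda>i. \<integral>x. (f x - F i x)\<^sup>2 \<partial>M) \<longlonglongrightarrow> 0"
proof -
  have [measurable]: "f \<in> borel_measurable M" and f2: "integrable M (\<lambda>x. (f x)\<^sup>2)"
    using f unfolding sq_integrable_def by auto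
  obtain F where F: "\<And>i. simple_function M (F i)" "\<And>x. x \<in> space M \<Longrightarrow> (\<lambda>i. F i x) \<longlonglongrightarrow> f x"
    "\<And>i x. x \<in> space M \<Longrightarrow> \<bar>F i x\<bar> \<le> 2 * \<bar>f x\<bar>"
  proof -
    obtain F where "\<forall>i. simple_function M (F i)" "\<forall>x\<in>space M. (\<lambda>i. F i x) \<longlonglongrightarrow> f x"
      "\<forall>i. \<forall>x\<in>space M. dist (F i x) 0 \<le> 2 * dist (f x) 0"
      using borel_measurable_implies_sequence_metric[of f M 0] by auto
    then show thesis
      by (intro that[of F]) (auto simp: dist_real_def)
  qed
  have [measurable]: "F i \<in> borel_measurable M" for i
    using F(1) by (rule borel_measurable_simple_function)
  have bound: "(f x - F i x)\<^sup>2 \<le> 9 * (f x)\<^sup>2" if "x \<in> space M" for i x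
  proof -
    have "\<bar>f x - F i x\<bar> \<le> \<bar>3 * f x\<bar>"
      using F(3)[OF that, of i] by linarith
    then show ?thesis
      by (simp add: abs_le_square_iff power_mult_distrib)
  qed
  have "(\<lambda>i. \<integral>x. (f x - F i x)\<^sup>2 \<partial>M) \<longlonglongrightarrow> (\<integral>x. 0 \<partial>M)"
  proof (rule integral_dominated_convergence[where w = "\<lambda>x. 9 * (f x)\<^sup>2"])
    have "(\<lambda>i. (f x - F i x)\<^sup>2) \<longlonglongrightarrow> (f x - f x)\<^sup>2" if "x \<in> space M" for x
      by (intro tendsto_intros F(2)[OF that])
    then show "AE x in M. (\<lambda>i. (f x - F i x)\<^sup>2) \<longlonglongrightarrow> 0"
      by (intro AE_I2) simp
    show "AE x in M. norm ((f x - F i x)\<^sup>2) \<le> 9 * (f x)\<^sup>2" for i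
      using bound by (intro AE_I2) simp
    show "integrable M (\<lambda>x. 9 * (f x)\<^sup>2)"
      using f2 by simp
    show "(\<lambda>x. (f x - F i x)\<^sup>2) \<in> borel_measurable M" for i
      by measurable
  qed simp
  with F(1) show thesis
    by (intro that[of F]) simp_all
qed

lemma integral_sq_le_of_orthogonal:
  assumes f: "sq_integrable M f" and g: "sq_integrable M g" and orth: "(\<integral>x. f x * g x \<partial>M) = 0"
  shows "(\<integral>x. (f x)\<^sup>2 \<partial>M) \<le> (\<integral>x. (f x - g x)\<^sup>2 \<partial>M)"
proof -
  have f2: "integrable M (\<lambda>x. (f x)\<^sup>2)" and g2: "integrable M (\<lambda>x. (g x)\<^sup>2)"
    and fg: "integrable M (\<lambda>x. f x * g x)"
    using f g integrable_mult_sq_integrable[OF f g] unfolding sq_integrable_def by auto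
  have "(f x - g x)\<^sup>2 = (f x)\<^sup>2 + (g x)\<^sup>2 - 2 * (f x * g x)" for x
    by (simp add: power2_diff algebra_simps)
  then have "(\<integral>x. (f x - g x)\<^sup>2 \<partial>M) = (\<integral>x. (f x)\<^sup>2 \<partial>M) + (\<integral>x. (g x)\<^sup>2 \<partial>M)"
    using f2 g2 fg orth by simp
  moreover have "(\<integral>x. (g x)\<^sup>2 \<partial>M) \<ge> 0"
    by (rule integral_nonneg_AE) simp
  ultimately show ?thesis
    by linarith
qed

definition l2_approximable :: "'a measure \<Rightarrow> ('a \<Rightarrow> real) set \<Rightarrow> ('a \<Rightarrow> real) \<Rightarrow> bool" where
  "l2_approximable M S f \<longleftrightarrow>
     sq_integrable M f \<and> (\<forall>e>0. \<exists>g\<in>S. (\<integral>x. (f x - g x)\<^sup>2 \<partial>M) < e)"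

locale l2_subspace = finite_measure M for M :: "'a measure" +
  fixes S :: "('a \<Rightarrow> real) set"
  assumes sq_integrable_S: "f \<in> S \<Longrightarrow> sq_integrable M f"
    and zero_S: "(\<lambda>x. 0) \<in> S"
    and add_S: "f \<in> S \<Longrightarrow> g \<in> S \<Longrightarrow> (\<lambda>x. f x + g x) \<in> S"
    and cmult_S: "f \<in> S \<Longrightarrow> (\<lambda>x. c * f x) \<in> S"
begin

abbreviation approximable :: "('a \<Rightarrow> real) \<Rightarrow> bool" where
  "approximable \<equiv> l2_approximable M S"

lemma approximable_mem: "g \<in> S \<Longrightarrow> approximable g"
  using sq_integrable_S unfolding l2_approximable_def by (auto intro!: bexI[of _ g])

lemma approximable_limit:
  assumes u: "sq_integrable M u"
    and approx: "\<And>e. e > 0 \<Longrightarrow> \<exists>v. approximable v \<and> (\<integral>x. (u x - v x)\<^sup>2 \<partial>M) < e"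
  shows "approximable u"
  unfolding l2_approximable_def
proof (intro conjI allI impI u)
  fix e :: real assume "e > 0"
  then obtain v where v: "approximable v" "(\<integral>x. (u x - v x)\<^sup>2 \<partial>M) < e/4"
    using approx[of "e/4"] by auto
  then obtain g where g: "g \<in> S" "(\<integral>x. (v x - g x)\<^sup>2 \<partial>M) < e/4"
    using \<open>e > 0\<close> unfolding l2_approximable_def by (meson divide_pos_pos zero_less_numeral)
  have "(\<integral>x. (u x - g x)\<^sup>2 \<partial>M) < e"
    using sq_dist_triangle[OF u _ sq_integrable_S[OF g(1)], of v] v g
    unfolding l2_approximable_def by linarith
  with g(1) show "\<exists>g\<in>S. (\<integral>x. (u x - g x)\<^sup>2 \<partial>M) < e"
    by blast
qed

lemma approximable_add:
  assumes u: "approximable u" and v: "approximable v"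
  shows "approximable (\<lambda>x. u x + v x)"
proof (rule approximable_limit)
  have su: "sq_integrable M u" and sv: "sq_integrable M v"
    using u v unfolding l2_approximable_def by auto
  then show "sq_integrable M (\<lambda>x. u x + v x)"
    by (rule sq_integrable_add)
  fix e :: real assume "e > 0"
  then obtain g1 g2 where g: "g1 \<in> S" "(\<integral>x. (u x - g1 x)\<^sup>2 \<partial>M) < e/4"
      "g2 \<in> S" "(\<integral>x. (v x - g2 x)\<^sup>2 \<partial>M) < e/4"
    using u v unfolding l2_approximable_def by (meson divide_pos_pos zero_less_numeral)
  have "sq_integrable M (\<lambda>x. 0)"
    by (simp add: sq_integrable_def)
  moreover have "sq_integrable M (\<lambda>x. u x - g1 x)" "sq_integrable M (\<lambda>x. g2 x - v x)"
    using su sv sq_integrable_S[OF g(1)] sq_integrable_S[OF g(3)] by (auto intro: sq_integrable_diff)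
  ultimately have "(\<integral>x. (u x - g1 x - (g2 x - v x))\<^sup>2 \<partial>M)
      \<le> 2 * (\<integral>x. (u x - g1 x - 0)\<^sup>2 \<partial>M) + 2 * (\<integral>x. (0 - (g2 x - v x))\<^sup>2 \<partial>M)"
    by (intro sq_dist_triangle)
  moreover have "(u x - g1 x - (g2 x - v x))\<^sup>2 = (u x + v x - (g1 x + g2 x))\<^sup>2"
    "(0 - (g2 x - v x))\<^sup>2 = (v x - g2 x)\<^sup>2" for x
    by (simp_all add: algebra_simps)
  ultimately have "(\<integral>x. (u x + v x - (g1 x + g2 x))\<^sup>2 \<partial>M)
      \<le> 2 * (\<integral>x. (u x - g1 x)\<^sup>2 \<partial>M) + 2 * (\<integral>x. (v x - g2 x)\<^sup>2 \<partial>M)"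
    by simp
  also have "\<dots> < e"
    using g by linarith
  finally show "\<exists>w. approximable w \<and> (\<integral>x. (u x + v x - w x)\<^sup>2 \<partial>M) < e"
    using approximable_mem[OF add_S[OF g(1,3)]] by blast
qed

lemma approximable_cmult:
  assumes u: "approximable u"
  shows "approximable (\<lambda>x. c * u x)"
  unfolding l2_approximable_def
proof (intro conjI allI impI)
  show "sq_integrable M (\<lambda>x. c * u x)"
    using u unfolding l2_approximable_def by (simp add: sq_integrable_cmult)
  fix e :: real assume "e > 0"
  moreover have cpos: "c\<^sup>2 + 1 > 0"
    by (rule add_nonneg_pos) simp_all
  ultimately have "e / (c\<^sup>2 + 1) > 0"
    by simp
  then obtain g where g: "g \<in> S" "(\<integral>x. (u x - g x)\<^sup>2 \<partial>M) < e / (c\<^sup>2 + 1)"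
    using u unfolding l2_approximable_def by blast
  have "(\<integral>x. (c * u x - c * g x)\<^sup>2 \<partial>M) = c\<^sup>2 * (\<integral>x. (u x - g x)\<^sup>2 \<partial>M)"
    by (simp add: power_mult_distrib flip: right_diff_distrib)
  also have "\<dots> \<le> (c\<^sup>2 + 1) * (\<integral>x. (u x - g x)\<^sup>2 \<partial>M)"
    by (simp add: distrib_right)
  also have "\<dots> < e"
    using g(2) cpos by (simp add: pos_less_divide_eq mult.commute)
  finally show "\<exists>g\<in>S. (\<integral>x. (c * u x - g x)\<^sup>2 \<partial>M) < e"
    using cmult_S[OF g(1), of c] by (intro bexI[of _ "\<lambda>x. c * g x"])
qed

lemma approximable_cong:
  assumes "approximable f" "\<And>x. x \<in> space M \<Longrightarrow> f x = g x"
  shows "approximable g"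
proof -
  have "g \<in> borel_measurable M"
    using assms measurable_cong[of M f g] unfolding l2_approximable_def sq_integrable_def by simp
  moreover have "integrable M (\<lambda>x. (g x)\<^sup>2) = integrable M (\<lambda>x. (f x)\<^sup>2)"
    using assms(2) by (intro Bochner_Integration.integrable_cong) auto
  moreover have "(\<integral>x. (g x - h x)\<^sup>2 \<partial>M) = (\<integral>x. (f x - h x)\<^sup>2 \<partial>M)" for h
    using assms(2) by (intro Bochner_Integration.integral_cong) auto
  ultimately show ?thesis
    using assms(1) unfolding l2_approximable_def sq_integrable_def by simp
qed

lemma approximable_sum:
  "finite I \<Longrightarrow> (\<And>i. i \<in> I \<Longrightarrow> approximable (f i)) \<Longrightarrow> approximable (\<lambda>x. \<Sum>i\<in>I. f i x)"
proof (induction rule: finite_induct)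
  case empty
  show ?case
    using approximable_mem[OF zero_S] by simp
next
  case (insert i I)
  then show ?case
    using approximable_add[of "f i" "\<lambda>x. \<Sum>i\<in>I. f i x"] by simp
qed

lemma approximable_simple_function:
  assumes indicator: "\<And>A. A \<in> sets M \<Longrightarrow> approximable (indicator A)"
    and f: "simple_function M f"
  shows "approximable f"
proof (rule approximable_cong)
  show "approximable (\<lambda>x. \<Sum>y\<in>f ` space M. y * indicator (f -` {y} \<inter> space M) x)"
  proof (rule approximable_sum)
    show "finite (f ` space M)"
      using f by (rule simple_functionD)
    fix y
    have "f -` {y} \<inter> space M \<in> sets M"
      using f by (rule simple_functionD)
    then show "approximable (\<lambda>x. y * indicator (f -` {y} \<inter> space M) x)"
      by (intro approximable_cmult indicator)
  qed
  show "(\<Sum>y\<in>f ` space M. y * indicator (f -` {y} \<inter> space M) x) = f x" if "x \<in> space M" for x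
  proof -
    have "f x = (\<Sum>y\<in>f ` space M. indicator (f -` {y} \<inter> space M) x *\<^sub>R y)"
      by (rule simple_function_indicator_representation_banach[OF f that])
    also have "\<dots> = (\<Sum>y\<in>f ` space M. y * indicator (f -` {y} \<inter> space M) x)"
      by (simp add: mult.commute)
    finally show ?thesis
      by (rule sym)
  qed
qed

theorem approximable_sq_integrable:
  assumes indicator: "\<And>A. A \<in> sets M \<Longrightarrow> approximable (indicator A)"
    and f: "sq_integrable M f"
  shows "approximable f"
proof (rule approximable_limit[OF f])
  obtain F where F: "\<And>i. simple_function M (F i)" "(\<lambda>i. \<integral>x. (f x - F i x)\<^sup>2 \<partial>M) \<longlonglongrightarrow> 0"
    by (rule sq_integrable_simple_function_approx[OF f]) blast
  fix e :: real assume "e > 0"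
  with F(2) have "\<forall>\<^sub>F i in sequentially. (\<integral>x. (f x - F i x)\<^sup>2 \<partial>M) < e"
    by (simp add: order_tendstoD(2))
  then obtain i where "(\<integral>x. (f x - F i x)\<^sup>2 \<partial>M) < e"
    using eventually_sequentially by auto
  then show "\<exists>v. approximable v \<and> (\<integral>x. (f x - v x)\<^sup>2 \<partial>M) < e"
    using approximable_simple_function[OF indicator F(1)] by blast
qed

lemma approximable_orthogonal_imp_AE_zero:
  assumes f: "approximable f" and orth: "\<And>g. g \<in> S \<Longrightarrow> (\<integral>x. f x * g x \<partial>M) = 0"
  shows "AE x in M. f x = 0"
proof -
  have sf: "sq_integrable M f"
    using f unfolding l2_approximable_def by simp
  then have f2: "integrable M (\<lambda>x. (f x)\<^sup>2)"
    unfolding sq_integrable_def by simp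
  have "(\<integral>x. (f x)\<^sup>2 \<partial>M) < e" if "e > 0" for e
  proof -
    obtain g where g: "g \<in> S" "(\<integral>x. (f x - g x)\<^sup>2 \<partial>M) < e"
      using f \<open>e > 0\<close> unfolding l2_approximable_def by blast
    then show ?thesis
      using integral_sq_le_of_orthogonal[OF sf sq_integrable_S[OF g(1)] orth[OF g(1)]] by linarith
  qed
  then have "\<not> (\<integral>x. (f x)\<^sup>2 \<partial>M) > 0"
    by (meson less_irrefl)
  moreover have "(\<integral>x. (f x)\<^sup>2 \<partial>M) \<ge> 0"
    by (rule integral_nonneg_AE) simp
  ultimately have "(\<integral>x. (f x)\<^sup>2 \<partial>M) = 0"
    by linarith
  then have "AE x in M. (f x)\<^sup>2 = 0"
    using integral_nonneg_eq_0_iff_AE[OF f2] by simp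
  then show ?thesis
    by simp
qed

end

section \<open>Density of trigonometric polynomials on \<open>[0, 2\<pi>]\<close>\<close>

abbreviation lborel_2pi :: "real measure" where
  "lborel_2pi \<equiv> restrict_space lborel {0..2*pi}"

lemma interval_2pi_in_sets_lborel: "{0..2*pi} \<inter> space lborel \<in> sets lborel"
  by simp

lemma space_lborel_2pi [simp]: "space lborel_2pi = {0..2*pi}"
  by (simp add: space_restrict_space)

lemma measure_lborel_2pi_space [simp]: "measure lborel_2pi {0..2*pi} = 2*pi"
  by (subst measure_restrict_space) auto

interpretation lborel_2pi: finite_measure lborel_2pi
  by (rule finite_measureI) (subst emeasure_restrict_space; simp)

lemma set_integral_eq_integral_lborel_2pi:
  "(LINT s:{0..2*pi}|lborel. f s) = (\<integral>s. f s \<partial>lborel_2pi)" for f :: "real \<Rightarrow> 'a::{banach, second_countable_topology}"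
  unfolding set_lebesgue_integral_def by (rule integral_restrict_space[symmetric]) simp

lemma L2_02pi_iff_sq_integrable: "\<theta> \<in> L2_02pi \<longleftrightarrow> sq_integrable lborel_2pi \<theta>"
  unfolding L2_02pi_def sq_integrable_def set_borel_measurable_def set_integrable_def
  by (simp add: borel_measurable_restrict_space_iff integrable_restrict_space)

lemma L2_dist_eq_sqrt_integral: "L2_dist \<theta> \<eta> = sqrt (\<integral>s. (\<theta> s - \<eta> s)\<^sup>2 \<partial>lborel_2pi)"
  unfolding L2_dist_def set_integral_eq_integral_lborel_2pi ..

lemma borel_measurable_lborel_2pi: "f \<in> borel_measurable borel \<Longrightarrow> f \<in> borel_measurable lborel_2pi"
  by (rule measurable_restrict_space1) simp

lemma sq_integrable_continuous_on:
  fixes f :: "real \<Rightarrow> real"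
  assumes "continuous_on {0..2*pi} f"
  shows "sq_integrable lborel_2pi f"
proof -
  have "f \<in> borel_measurable (restrict_space borel {0..2*pi})"
    using assms by (rule borel_measurable_continuous_on_restrict)
  then have "f \<in> borel_measurable lborel_2pi"
    by (simp add: measurable_cong_sets[OF sets_restrict_space_cong[OF sets_lborel] refl])
  moreover obtain B where "\<And>x. x \<in> {0..2*pi} \<Longrightarrow> \<bar>f x\<bar> \<le> B"
  proof -
    have "bounded (f ` {0..2*pi})"
      using compact_imp_bounded[OF compact_continuous_image[OF assms compact_Icc]] .
    then obtain B where "\<forall>x\<in>{0..2*pi}. \<bar>f x\<bar> \<le> B"
      by (auto simp: bounded_real)
    then show thesis
      by (intro that) auto
  qed
  ultimately show ?thesis
    by (intro lborel_2pi.sq_integrable_bounded) auto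
qed

lemma sq_integrable_trig_poly: "f \<in> trig_poly \<Longrightarrow> sq_integrable lborel_2pi f"
  by (intro sq_integrable_continuous_on continuous_on_trig_poly)

lemma integrable_trig_poly: "w \<in> trig_poly \<Longrightarrow> integrable lborel_2pi w"
  using sq_integrable_trig_poly[of w] lborel_2pi.square_integrable_imp_integrable
  unfolding sq_integrable_def by blast

interpretation trig: l2_subspace lborel_2pi trig_poly
  by unfold_locales (auto intro: sq_integrable_trig_poly trig_poly_const trig_poly_add trig_poly_cmult)

lemma approximable_continuous_periodic:
  fixes c :: "real \<Rightarrow> real"
  assumes c: "continuous_on {0..2*pi} c" and periodic: "c 0 = c (2*pi)"
  shows "trig.approximable c"
  unfolding l2_approximable_def
proof (intro conjI allI impI)
  show "sq_integrable lborel_2pi c"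
    using c by (rule sq_integrable_continuous_on)
  fix e :: real assume "e > 0"
  define \<delta> where "\<delta> = sqrt (e / (4*pi))"
  have "\<delta> > 0"
    using \<open>e > 0\<close> by (simp add: \<delta>_def)
  then obtain g where g: "g \<in> trig_poly" "\<And>s. s \<in> {0..2*pi} \<Longrightarrow> \<bar>c s - g s\<bar> < \<delta>"
    using uniform_approx_trig_poly[OF c periodic] by blast
  have "(c s - g s)\<^sup>2 \<le> \<delta>\<^sup>2" if "s \<in> {0..2*pi}" for s
    using g(2)[OF that] \<open>\<delta> > 0\<close> abs_le_square_iff[of "c s - g s" \<delta>] by simp
  then have "(\<integral>s. (c s - g s)\<^sup>2 \<partial>lborel_2pi) \<le> (\<integral>s. \<delta>\<^sup>2 \<partial>lborel_2pi)"
    using integrable_sq_diff[OF sq_integrable_continuous_on[OF c] sq_integrable_trig_poly[OF g(1)]]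
    by (intro integral_mono) auto
  also have "\<dots> = e / 2"
    using \<open>e > 0\<close> by (simp add: \<delta>_def)
  finally show "\<exists>g\<in>trig_poly. (\<integral>s. (c s - g s)\<^sup>2 \<partial>lborel_2pi) < e"
    using g(1) \<open>e > 0\<close> by (intro bexI[of _ g]) auto
qed

lemma open_covers_small_overlap:
  fixes A :: "real set" and e :: real
  assumes A: "A \<in> sets borel" and e: "e > 0"
  obtains U V where "open U" "open V" "A \<subseteq> U" "- A \<subseteq> V" "emeasure lborel (U \<inter> V) < e"
proof -
  obtain U where U: "open U" "A \<subseteq> U" "emeasure lborel (U - A) < e / 3"
    using outer_regular_lborel[OF A, of "e / 3"] e by auto
  obtain V where V: "open V" "- A \<subseteq> V" "emeasure lborel (V - - A) < e / 3"
    using outer_regular_lborel[OF borel_comp[OF A], of "e / 3"] e by auto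
  have sets: "U - A \<in> sets borel" "V - - A \<in> sets borel"
    using A U(1) V(1) by auto
  have "emeasure lborel (U \<inter> V) \<le> emeasure lborel ((U - A) \<union> (V - - A))"
    using sets by (intro emeasure_mono) auto
  also have "\<dots> \<le> emeasure lborel (U - A) + emeasure lborel (V - - A)"
    using sets by (intro emeasure_subadditive) auto
  also have "\<dots> \<le> ennreal (e / 3) + ennreal (e / 3)"
    using U(3) V(3) by (intro add_mono) auto
  also have "\<dots> < ennreal e"
    using e by (simp flip: ennreal_plus) (simp add: ennreal_lessI)
  finally show thesis
    using U(1,2) V(1,2) that by blast
qed

lemma urysohn_indicator:
  fixes A U V :: "real set" and \<eta> :: real
  assumes "open U" "open V" "A \<subseteq> U" "- A \<subseteq> V" "\<eta> > 0"
  obtains f :: "real \<Rightarrow> real" where "continuous_on UNIV f" "\<And>x. 0 \<le> f x \<and> f x \<le> 1"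
    "f 0 = 0" "f (2*pi) = 0" "\<And>x. x \<in> {\<eta>..2*pi-\<eta>} - U \<inter> V \<Longrightarrow> f x = indicator A x"
proof -
  define C where "C = - V \<inter> {\<eta>..2*pi-\<eta>}"
  define F where "F = - U \<union> {..0} \<union> {2*pi..}"
  have "closed C" "closed F" "C \<inter> F = {}"
    using assms unfolding C_def F_def by auto
  then obtain f :: "real \<Rightarrow> real" where f: "continuous_on UNIV f"
      "\<And>x. f x \<in> closed_segment 1 0" "\<And>x. x \<in> C \<Longrightarrow> f x = 1" "\<And>x. x \<in> F \<Longrightarrow> f x = 0"
    using Urysohn[of C F 1 0] by blast
  show thesis
  proof (rule that[OF f(1)])
    show "0 \<le> f x \<and> f x \<le> 1" for x
      using f(2)[of x] by (simp add: closed_segment_eq_real_ivl)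
    show "f 0 = 0" "f (2*pi) = 0"
      by (simp_all add: f(4) F_def)
    show "f x = indicator A x" if "x \<in> {\<eta>..2*pi-\<eta>} - U \<inter> V" for x
      using that assms(3,4) f(3)[of x] f(4)[of x] unfolding C_def F_def indicator_def by auto
  qed
qed

lemma continuous_approx_indicator:
  fixes A :: "real set" and e :: real
  assumes A: "A \<in> sets borel" and e: "e > 0"
  obtains f :: "real \<Rightarrow> real" and W :: "real set"
  where "continuous_on UNIV f" "\<And>x. 0 \<le> f x \<and> f x \<le> 1" "f 0 = 0" "f (2*pi) = 0"
    "W \<in> sets borel" "emeasure lborel W < e"
    "\<And>x. x \<in> {0..2*pi} - W \<Longrightarrow> f x = indicator A x"
proof -
  obtain U V where UV: "open U" "open V" "A \<subseteq> U" "- A \<subseteq> V" "emeasure lborel (U \<inter> V) < e / 2"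
    using open_covers_small_overlap[OF A, of "e / 2"] e by auto
  obtain f :: "real \<Rightarrow> real" where f: "continuous_on UNIV f" "\<And>x. 0 \<le> f x \<and> f x \<le> 1"
    "f 0 = 0" "f (2*pi) = 0" "\<And>x. x \<in> {e/8..2*pi-e/8} - U \<inter> V \<Longrightarrow> f x = indicator A x"
    using urysohn_indicator[OF UV(1-4), of "e / 8"] e by auto
  define W where "W = U \<inter> V \<union> {0..e/8} \<union> {2*pi-e/8..2*pi}"
  show thesis
  proof (rule that[OF f(1-4)])
    show "W \<in> sets borel"
      using UV(1,2) unfolding W_def by auto
    show "f x = indicator A x" if "x \<in> {0..2*pi} - W" for x
      using that f(5)[of x] unfolding W_def by auto
    have "emeasure lborel W \<le> emeasure lborel (U \<inter> V \<union> {0..e/8}) + emeasure lborel {2*pi-e/8..2*pi}"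
      unfolding W_def using UV(1,2) by (intro emeasure_subadditive) auto
    also have "\<dots> \<le> emeasure lborel (U \<inter> V) + emeasure lborel {0..e/8} + emeasure lborel {2*pi-e/8..2*pi}"
      using UV(1,2) by (intro add_right_mono emeasure_subadditive) auto
    also have "\<dots> \<le> ennreal (e / 2) + ennreal (e / 8) + ennreal (e / 8)"
      using UV(5) e by (intro add_mono) auto
    also have "\<dots> < ennreal e"
      using e by (simp flip: ennreal_plus) (simp add: ennreal_lessI)
    finally show "emeasure lborel W < e" .
  qed
qed

lemma approximable_indicator:
  assumes "A \<in> sets lborel_2pi"
  shows "trig.approximable (indicator A)"
proof (rule trig.approximable_limit)
  have A: "A \<in> sets borel"
    using assms sets_restrict_space_iff[OF interval_2pi_in_sets_lborel] by auto
  then show "sq_integrable lborel_2pi (indicator A)"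
    by (intro lborel_2pi.sq_integrable_bounded[where B = 1] borel_measurable_lborel_2pi)
      (auto simp: indicator_def)
  fix e :: real assume "e > 0"
  then obtain f :: "real \<Rightarrow> real" and W where f: "continuous_on UNIV f" "\<And>x. 0 \<le> f x \<and> f x \<le> 1" "f 0 = 0" "f (2*pi) = 0"
    and W: "W \<in> sets borel" "emeasure lborel W < e" "\<And>x. x \<in> {0..2*pi} - W \<Longrightarrow> f x = indicator A x"
    using continuous_approx_indicator[OF A] by blast
  have f_approx: "trig.approximable f"
    using f by (intro approximable_continuous_periodic) (auto intro: continuous_on_subset)
  have "(indicator A x - f x)\<^sup>2 \<le> indicator W x" if "x \<in> {0..2*pi}" for x
  proof (cases "x \<in> W")
    case True
    have "\<bar>indicator A x - f x\<bar> \<le> 1"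
      using f(2)[of x] by (auto simp: indicator_def)
    with True show ?thesis
      using abs_le_square_iff[of "indicator A x - f x" 1] by simp
  qed (use that W(3) in simp)
  moreover have "integrable lborel_2pi (\<lambda>x. (indicator A x - f x)\<^sup>2)"
    using \<open>sq_integrable lborel_2pi (indicator A)\<close> f_approx
    by (intro integrable_sq_diff) (simp_all add: l2_approximable_def)
  moreover have "integrable lborel_2pi (indicator W :: real \<Rightarrow> real)"
    using W(1) by (intro lborel_2pi.integrable_const_bound[where B = 1] borel_measurable_lborel_2pi)
      (auto simp: indicator_def)
  ultimately have "(\<integral>x. (indicator A x - f x)\<^sup>2 \<partial>lborel_2pi) \<le> (\<integral>x. indicator W x \<partial>lborel_2pi)"
    by (intro integral_mono) auto
  also have "\<dots> = measure lborel (W \<inter> {0..2*pi})"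
    by (simp add: measure_restrict_space)
  also have "\<dots> < e"
    using order.strict_trans1[OF emeasure_mono[of "W \<inter> {0..2*pi}" W lborel] W(2)] W(1)
    unfolding measure_def by (simp add: order.strict_trans)
  finally show "\<exists>v. trig.approximable v \<and> (\<integral>x. (indicator A x - v x)\<^sup>2 \<partial>lborel_2pi) < e"
    using f_approx by (intro exI[of _ f] conjI)
qed

theorem approximable_trig_poly: "sq_integrable lborel_2pi f \<Longrightarrow> trig.approximable f"
  by (rule trig.approximable_sq_integrable[OF approximable_indicator])

section \<open>The constraint map and its derivative\<close>

lemma borel_measurable_cis_comp [measurable]:
  assumes "\<theta> \<in> borel_measurable M"
  shows "(\<lambda>s. cis (\<theta> s)) \<in> borel_measurable M"
proof -
  have "continuous_on UNIV (\<lambda>x. cis x)"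
    by (intro continuous_intros)
  then show ?thesis
    using measurable_compose[OF assms borel_measurable_continuous_onI] by blast
qed

lemma integrable_cis_comp:
  "\<theta> \<in> borel_measurable lborel_2pi \<Longrightarrow> integrable lborel_2pi (\<lambda>s. cis (\<theta> s))"
  by (intro lborel_2pi.integrable_const_bound[where B = 1]) auto

lemma integrable_scaleR_i_cis:
  assumes "integrable lborel_2pi w" "\<theta> \<in> borel_measurable lborel_2pi"
  shows "integrable lborel_2pi (\<lambda>s. w s *\<^sub>R (\<i> * cis (\<theta> s)))"
proof (rule Bochner_Integration.integrable_bound[OF integrable_norm[OF assms(1)]])
  show "(\<lambda>s. w s *\<^sub>R (\<i> * cis (\<theta> s))) \<in> borel_measurable lborel_2pi"
    using assms by measurable
  show "AE s in lborel_2pi. norm (w s *\<^sub>R (\<i> * cis (\<theta> s))) \<le> norm (norm (w s))"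
    by (simp add: norm_mult)
qed

lemma integral_cis_comp:
  assumes "\<theta> \<in> borel_measurable lborel_2pi"
  shows "(\<integral>s. cis (\<theta> s) \<partial>lborel_2pi) = Complex (\<integral>s. cos (\<theta> s) \<partial>lborel_2pi) (\<integral>s. sin (\<theta> s) \<partial>lborel_2pi)"
  using integral_Re[OF integrable_cis_comp[OF assms]] integral_Im[OF integrable_cis_comp[OF assms]]
  by (simp add: complex_eq_iff)

text \<open>The two constraints on \<open>cos\<close> and \<open>sin\<close> are combined into one complex constraint on \<open>cis\<close>.\<close>

definition constraint_map :: "(real \<Rightarrow> real) \<Rightarrow> real \<times> complex" where
  "constraint_map \<eta> = ((\<integral>s. \<eta> s \<partial>lborel_2pi), (\<integral>s. cis (\<eta> s) \<partial>lborel_2pi))"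

definition constraint_deriv :: "(real \<Rightarrow> real) \<Rightarrow> (real \<Rightarrow> real) \<Rightarrow> real \<times> complex" where
  "constraint_deriv \<theta> w = ((\<integral>s. w s \<partial>lborel_2pi), (\<integral>s. w s *\<^sub>R (\<i> * cis (\<theta> s)) \<partial>lborel_2pi))"

lemma M_set_iff_constraint_map:
  "\<theta> \<in> M_set \<longleftrightarrow> sq_integrable lborel_2pi \<theta> \<and> constraint_map \<theta> = (2 * pi\<^sup>2, 0)"
proof -
  have "(\<integral>s. cis (\<theta> s) \<partial>lborel_2pi) = 0 \<longleftrightarrow>
      (\<integral>s. cos (\<theta> s) \<partial>lborel_2pi) = 0 \<and> (\<integral>s. sin (\<theta> s) \<partial>lborel_2pi) = 0"
    if "sq_integrable lborel_2pi \<theta>"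
    using that integral_cis_comp[of \<theta>] unfolding sq_integrable_def by (simp add: complex_eq_iff)
  then show ?thesis
    unfolding M_set_def constraint_map_def L2_02pi_iff_sq_integrable set_integral_eq_integral_lborel_2pi
    by auto
qed

lemma constraint_deriv_add:
  assumes "\<theta> \<in> borel_measurable lborel_2pi" "integrable lborel_2pi v" "integrable lborel_2pi w"
  shows "constraint_deriv \<theta> (\<lambda>s. v s + w s) = constraint_deriv \<theta> v + constraint_deriv \<theta> w"
  using integrable_scaleR_i_cis[OF assms(2,1)] integrable_scaleR_i_cis[OF assms(3,1)] assms(2,3)
  by (simp add: constraint_deriv_def scaleR_add_left)

lemma constraint_deriv_cmult: "constraint_deriv \<theta> (\<lambda>s. c * w s) = c *\<^sub>R constraint_deriv \<theta> w"
  by (simp add: constraint_deriv_def flip: scaleR_scaleR)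

lemma constraint_deriv_sum:
  assumes "\<theta> \<in> borel_measurable lborel_2pi"
  shows "finite I \<Longrightarrow> (\<And>i. i \<in> I \<Longrightarrow> w i \<in> trig_poly) \<Longrightarrow>
    constraint_deriv \<theta> (\<lambda>s. \<Sum>i\<in>I. c i * w i s) = (\<Sum>i\<in>I. c i *\<^sub>R constraint_deriv \<theta> (w i))"
proof (induction rule: finite_induct)
  case empty
  show ?case
    by (simp add: constraint_deriv_def zero_prod_def)
next
  case (insert i I)
  have "integrable lborel_2pi (\<lambda>s. c i * w i s)" "integrable lborel_2pi (\<lambda>s. \<Sum>i\<in>I. c i * w i s)"
    using insert by (auto intro!: integrable_trig_poly trig_poly_cmult trig_poly_sum)
  with insert show ?case
    by (simp add: constraint_deriv_add[OF assms] constraint_deriv_cmult)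
qed

lemma subspace_constraint_deriv_image:
  assumes "\<theta> \<in> borel_measurable lborel_2pi"
  shows "subspace (constraint_deriv \<theta> ` trig_poly)"
  unfolding subspace_def
proof (intro conjI ballI allI)
  have "constraint_deriv \<theta> (\<lambda>s. 0) = 0"
    by (simp add: constraint_deriv_def zero_prod_def)
  then show "0 \<in> constraint_deriv \<theta> ` trig_poly"
    using trig_poly_const by (rule image_eqI[OF sym])
next
  fix x y assume "x \<in> constraint_deriv \<theta> ` trig_poly" "y \<in> constraint_deriv \<theta> ` trig_poly"
  then obtain v w where vw: "v \<in> trig_poly" "w \<in> trig_poly"
    and "x = constraint_deriv \<theta> v" "y = constraint_deriv \<theta> w"
    by blast
  then have "x + y = constraint_deriv \<theta> (\<lambda>s. v s + w s)"
    using constraint_deriv_add[OF assms integrable_trig_poly integrable_trig_poly] by simp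
  then show "x + y \<in> constraint_deriv \<theta> ` trig_poly"
    using trig_poly_add[OF vw] by (rule image_eqI)
next
  fix c :: real and x assume "x \<in> constraint_deriv \<theta> ` trig_poly"
  then obtain w where w: "w \<in> trig_poly" and "x = constraint_deriv \<theta> w"
    by blast
  then have "c *\<^sub>R x = constraint_deriv \<theta> (\<lambda>s. c * w s)"
    by (simp add: constraint_deriv_cmult)
  then show "c *\<^sub>R x \<in> constraint_deriv \<theta> ` trig_poly"
    using trig_poly_cmult[OF w] by (rule image_eqI)
qed

lemma inner_i_cis: "z \<bullet> (\<i> * cis t) = - cmod z * sin (t - Arg z)"
proof -
  have "Re z = cmod z * cos (Arg z)" "Im z = cmod z * sin (Arg z)"
    using arg_cong[OF rcis_cmod_Arg[of z], of Re] arg_cong[OF rcis_cmod_Arg[of z], of Im] by simp_all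
  then show ?thesis
    by (simp add: inner_complex_def sin_diff algebra_simps)
qed

lemma linear_dependence_imp_Z_set:
  assumes \<theta>: "\<theta> \<in> M_set" and nz: "(c, z) \<noteq> 0"
    and ae: "AE s in lborel_2pi. c + z \<bullet> (\<i> * cis (\<theta> s)) = 0"
  shows "\<theta> \<in> Z_set"
proof -
  have [measurable]: "\<theta> \<in> borel_measurable lborel_2pi"
    and cos0: "(\<integral>s. cos (\<theta> s) \<partial>lborel_2pi) = 0" and sin0: "(\<integral>s. sin (\<theta> s) \<partial>lborel_2pi) = 0"
    using \<theta> integral_cis_comp[of \<theta>]
    unfolding M_set_iff_constraint_map constraint_map_def sq_integrable_def by (auto simp: complex_eq_iff)
  have ae': "AE s in lborel_2pi. c = cmod z * sin (\<theta> s - Arg z)"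
    using ae by eventually_elim (simp add: inner_i_cis)
  have "(\<integral>s. sin (\<theta> s - Arg z) \<partial>lborel_2pi) = 0"
    using cos0 sin0 lborel_2pi.integrable_const_bound[where B = 1, of "\<lambda>s. sin (\<theta> s)"]
      lborel_2pi.integrable_const_bound[where B = 1, of "\<lambda>s. cos (\<theta> s)"]
    by (simp add: sin_diff)
  moreover have "(\<integral>s. c \<partial>lborel_2pi) = (\<integral>s. cmod z * sin (\<theta> s - Arg z) \<partial>lborel_2pi)"
    using ae' by (intro integral_cong_AE) auto
  ultimately have "c = 0"
    by simp
  with nz have "z \<noteq> 0"
    by (simp add: zero_prod_def)
  have "AE s in lborel_2pi. \<exists>k::int. \<theta> s - Arg z = of_int k * pi"
    using ae' by eventually_elim (simp add: \<open>c = 0\<close> \<open>z \<noteq> 0\<close> sin_zero_iff_int2)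
  then have "AE s in lborel. s \<in> {0..2*pi} \<longrightarrow> (\<exists>k::int. \<theta> s - Arg z = of_int k * pi)"
    using AE_restrict_space_iff[OF interval_2pi_in_sets_lborel] by simp
  with \<theta> show ?thesis
    unfolding Z_set_def by blast
qed

lemma inner_constraint_deriv:
  assumes "\<theta> \<in> borel_measurable lborel_2pi" "integrable lborel_2pi w"
  shows "(c, z) \<bullet> constraint_deriv \<theta> w = (\<integral>s. (c + z \<bullet> (\<i> * cis (\<theta> s))) * w s \<partial>lborel_2pi)"
proof -
  have w: "integrable lborel_2pi (\<lambda>s. w s *\<^sub>R (\<i> * cis (\<theta> s)))"
    by (rule integrable_scaleR_i_cis[OF assms(2,1)])
  have "(\<integral>s. (c + z \<bullet> (\<i> * cis (\<theta> s))) * w s \<partial>lborel_2pi)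
      = (\<integral>s. c * w s + z \<bullet> (w s *\<^sub>R (\<i> * cis (\<theta> s))) \<partial>lborel_2pi)"
    by (simp add: algebra_simps)
  also have "\<dots> = (\<integral>s. c * w s \<partial>lborel_2pi) + (\<integral>s. z \<bullet> (w s *\<^sub>R (\<i> * cis (\<theta> s))) \<partial>lborel_2pi)"
    using assms(2) w by (intro Bochner_Integration.integral_add integrable_inner_right) auto
  also have "\<dots> = c * (\<integral>s. w s \<partial>lborel_2pi) + z \<bullet> (\<integral>s. w s *\<^sub>R (\<i> * cis (\<theta> s)) \<partial>lborel_2pi)"
    using w by (simp only: integral_mult_right_zero integral_inner_right)
  finally show ?thesis
    by (simp add: constraint_deriv_def)
qed

lemma constraint_deriv_surj:
  assumes \<theta>: "\<theta> \<in> M_set" "\<theta> \<notin> Z_set"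
  shows "constraint_deriv \<theta> ` trig_poly = UNIV"
proof (rule ccontr)
  let ?V = "constraint_deriv \<theta> ` trig_poly"
  assume "?V \<noteq> UNIV"
  have [measurable]: "\<theta> \<in> borel_measurable lborel_2pi"
    using \<theta> unfolding M_set_iff_constraint_map sq_integrable_def by simp
  have span_V: "span ?V = ?V"
    using subspace_constraint_deriv_image by simp
  with \<open>?V \<noteq> UNIV\<close> have "span ?V \<noteq> UNIV"
    by (simp only: not_False_eq_True)
  then obtain a where "a \<noteq> 0" and "span ?V \<subseteq> {x. a \<bullet> x = 0}"
    using span_not_univ_subset_hyperplane by blast
  moreover obtain c z where "a = (c, z)"
    by (cases a) blast
  ultimately have nz: "(c, z) \<noteq> 0" and orth: "\<And>w. w \<in> trig_poly \<Longrightarrow> (c, z) \<bullet> constraint_deriv \<theta> w = 0"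
    unfolding span_V by auto
  define G where "G s = c + z \<bullet> (\<i> * cis (\<theta> s))" for s
  have "G \<in> borel_measurable lborel_2pi"
    unfolding G_def by measurable
  moreover have "\<bar>G s\<bar> \<le> \<bar>c\<bar> + cmod z" for s
    using Cauchy_Schwarz_ineq2[of z "\<i> * cis (\<theta> s)"] unfolding G_def by (simp add: norm_mult)
  ultimately have "sq_integrable lborel_2pi G"
    by (intro lborel_2pi.sq_integrable_bounded) auto
  moreover have "(\<integral>s. G s * w s \<partial>lborel_2pi) = 0" if "w \<in> trig_poly" for w
    using orth[OF that] inner_constraint_deriv[OF _ integrable_trig_poly[OF that]] unfolding G_def by simp
  ultimately have "AE s in lborel_2pi. G s = 0"
    by (intro trig.approximable_orthogonal_imp_AE_zero approximable_trig_poly)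
  with \<theta> nz show False
    unfolding G_def using linear_dependence_imp_Z_set by blast
qed

definition bounded_right_inverse ::
    "(real \<Rightarrow> real) \<Rightarrow> real \<Rightarrow> (real \<times> complex \<Rightarrow> real \<Rightarrow> real) \<Rightarrow> bool" where
  "bounded_right_inverse \<theta> B \<tau> \<longleftrightarrow> (\<forall>t. \<tau> t \<in> trig_poly) \<and> (\<forall>t t' x. \<tau> t x - \<tau> t' x = \<tau> (t - t') x)
     \<and> (\<forall>t x. \<bar>\<tau> t x\<bar> \<le> B * norm t) \<and> (\<forall>t. constraint_deriv \<theta> (\<tau> t) = t)"

lemma bounded_right_inverseD:
  assumes "bounded_right_inverse \<theta> B \<tau>"
  shows "\<tau> t \<in> trig_poly" "\<tau> t x - \<tau> t' x = \<tau> (t - t') x" "\<bar>\<tau> t x\<bar> \<le> B * norm t"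
    "constraint_deriv \<theta> (\<tau> t) = t"
  using assms unfolding bounded_right_inverse_def by blast+

lemma bounded_right_inverse_exists:
  assumes \<theta>: "\<theta> \<in> M_set" "\<theta> \<notin> Z_set"
  shows "\<exists>B \<tau>. bounded_right_inverse \<theta> B \<tau>"
proof -
  have "\<forall>b. \<exists>w. w \<in> trig_poly \<and> constraint_deriv \<theta> w = b"
    using constraint_deriv_surj[OF \<theta>] by (metis UNIV_I imageE)
  then obtain w where w: "\<And>b. w b \<in> trig_poly" "\<And>b. constraint_deriv \<theta> (w b) = b"
    by metis
  have "\<forall>b. \<exists>C. \<forall>x. \<bar>w b x\<bar> \<le> C"
    using trig_poly_bounded[OF w(1)] by blast
  then obtain C where C: "\<And>b x. \<bar>w b x\<bar> \<le> C b"
    by metis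
  define \<tau> where "\<tau> t x = (\<Sum>b\<in>Basis. (t \<bullet> b) * w b x)" for t :: "real \<times> complex" and x
  have "\<bar>\<tau> t x\<bar> \<le> (\<Sum>b\<in>Basis. \<bar>C b\<bar>) * norm t" for t x
  proof -
    have "\<bar>\<tau> t x\<bar> \<le> (\<Sum>b\<in>Basis. \<bar>t \<bullet> b\<bar> * \<bar>w b x\<bar>)"
      unfolding \<tau>_def by (rule order.trans[OF sum_abs]) (simp add: abs_mult)
    also have "\<dots> \<le> (\<Sum>b\<in>Basis. norm t * \<bar>C b\<bar>)"
      using C by (intro sum_mono mult_mono Basis_le_norm) (auto intro: order.trans[OF _ abs_ge_self])
    finally show ?thesis
      by (simp add: sum_distrib_left[symmetric] mult.commute)
  qed
  moreover have "\<theta> \<in> borel_measurable lborel_2pi"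
    using \<theta>(1) unfolding M_set_iff_constraint_map sq_integrable_def by simp
  ultimately have "bounded_right_inverse \<theta> (\<Sum>b\<in>Basis. \<bar>C b\<bar>) \<tau>"
    unfolding bounded_right_inverse_def \<tau>_def using w
    by (auto intro!: trig_poly_sum trig_poly_cmult simp: constraint_deriv_sum euclidean_representation
        inner_diff_left left_diff_distrib sum_subtractf)
  then show ?thesis
    by blast
qed

section \<open>Correction onto the constraint set\<close>

lemma integral_sq_le_of_abs_le:
  assumes "sq_integrable lborel_2pi f" "\<And>s. s \<in> {0..2*pi} \<Longrightarrow> \<bar>f s\<bar> \<le> c"
  shows "(\<integral>s. (f s)\<^sup>2 \<partial>lborel_2pi) \<le> 2 * pi * c\<^sup>2"
proof -
  have "(f s)\<^sup>2 \<le> c\<^sup>2" if "s \<in> {0..2*pi}" for s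
    using assms(2)[OF that] abs_le_square_iff[of "f s" c] by simp
  then have "(\<integral>s. (f s)\<^sup>2 \<partial>lborel_2pi) \<le> (\<integral>s. c\<^sup>2 \<partial>lborel_2pi)"
    using assms(1) by (intro integral_mono) (auto simp: sq_integrable_def)
  then show ?thesis
    by simp
qed

lemma integral_abs_le_integral_sq:
  assumes "sq_integrable lborel_2pi f" "c > 0"
  shows "(\<integral>s. \<bar>f s\<bar> \<partial>lborel_2pi) \<le> pi * c + (\<integral>s. (f s)\<^sup>2 \<partial>lborel_2pi) / (2 * c)"
proof -
  have f2: "integrable lborel_2pi (\<lambda>s. (f s)\<^sup>2)" and f: "integrable lborel_2pi f"
    using assms(1) lborel_2pi.square_integrable_imp_integrable unfolding sq_integrable_def by auto
  have "\<bar>y\<bar> \<le> c / 2 + y\<^sup>2 / (2 * c)" for y :: real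
  proof -
    have "2 * c * \<bar>y\<bar> \<le> y\<^sup>2 + c\<^sup>2"
      using sum_squares_ge_zero[of "\<bar>y\<bar> - c" 0] by (simp add: power2_eq_square algebra_simps)
    then show ?thesis
      using assms(2) by (simp add: field_simps power2_eq_square)
  qed
  then have "(\<integral>s. \<bar>f s\<bar> \<partial>lborel_2pi) \<le> (\<integral>s. c / 2 + (f s)\<^sup>2 / (2 * c) \<partial>lborel_2pi)"
    using f f2 by (intro integral_mono) auto
  then show ?thesis
    using f2 by simp
qed

lemma integral_abs_le_of_integral_sq_le:
  assumes f: "sq_integrable lborel_2pi f" and r: "r > 0"
    and sq: "(\<integral>s. (f s)\<^sup>2 \<partial>lborel_2pi) \<le> r\<^sup>2 / (32 * pi)"
  shows "(\<integral>s. \<bar>f s\<bar> \<partial>lborel_2pi) \<le> r / 4"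
proof -
  have c: "r / (8 * pi) > 0"
    using r by simp
  have "(\<integral>s. \<bar>f s\<bar> \<partial>lborel_2pi) \<le> pi * (r / (8 * pi)) + (\<integral>s. (f s)\<^sup>2 \<partial>lborel_2pi) / (2 * (r / (8 * pi)))"
    by (rule integral_abs_le_integral_sq[OF f c])
  also have "\<dots> \<le> pi * (r / (8 * pi)) + (r\<^sup>2 / (32 * pi)) / (2 * (r / (8 * pi)))"
    using sq c by (intro add_left_mono divide_right_mono) auto
  also have "\<dots> = r / 4"
    using r by (simp add: field_simps power2_eq_square)
  finally show ?thesis .
qed

lemma norm_cis_minus_one_le: "cmod (cis t - 1) \<le> \<bar>t\<bar>"
proof -
  have "(cmod (cis t - 1))\<^sup>2 = ((sin t)\<^sup>2 + (cos t)\<^sup>2) + 1 - 2 * cos t"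
    by (simp add: cmod_power2 power2_diff)
  also have "\<dots> = 2 - 2 * cos t"
    by simp
  also have "\<dots> = 4 * (sin (t/2))\<^sup>2"
    using cos_double_sin[of "t/2"] by simp
  also have "\<dots> \<le> t\<^sup>2"
    using abs_sin_x_le_abs_x[of "t/2"] abs_le_square_iff[of "sin (t/2)" "t/2"]
    by (simp add: power_divide)
  finally show ?thesis
    using abs_le_square_iff[of "cmod (cis t - 1)" t] by simp
qed

lemma norm_cis_diff_le: "cmod (cis a - cis b) \<le> \<bar>a - b\<bar>"
proof -
  have "cis b * cis (a - b) = cis a"
    by (simp add: cis_mult)
  then have "cis a - cis b = cis b * (cis (a - b) - 1)"
    by (simp add: right_diff_distrib)
  then show ?thesis
    using norm_cis_minus_one_le[of "a - b"] by (simp add: norm_mult)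
qed

lemma norm_cis_taylor_le: "cmod (cis t - 1 - \<i> * t) \<le> t\<^sup>2"
proof -
  have "\<bar>cos t - 1\<bar> \<le> t\<^sup>2 / 2"
  proof -
    have "\<bar>cos t - 1\<bar> = 2 * (sin (t/2))\<^sup>2"
      using cos_double_sin[of "t/2"] by simp
    also have "\<dots> \<le> 2 * (t/2)\<^sup>2"
      using abs_sin_x_le_abs_x[of "t/2"] abs_le_square_iff[of "sin (t/2)" "t/2"] by simp
    finally show ?thesis
      by (simp add: power_divide)
  qed
  moreover have "\<bar>sin t - t\<bar> \<le> t\<^sup>2 / 2"
    using Maclaurin_sin_bound[of t 2] by (simp add: numeral_2_eq_2 sin_coeff_def)
  ultimately show ?thesis
    using cmod_le[of "cis t - 1 - \<i> * t"] by simp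
qed

lemma cis_linearization_le:
  "cmod (cis (\<psi> + t) - cis \<theta> - t *\<^sub>R (\<i> * cis \<theta>)) \<le> \<bar>\<theta> - \<psi>\<bar> + t\<^sup>2"
proof -
  have "cis (\<psi> + t) - cis \<theta> - t *\<^sub>R (\<i> * cis \<theta>)
      = (cis (\<psi> + t) - cis (\<theta> + t)) + cis \<theta> * (cis t - 1 - \<i> * t)"
    by (simp add: algebra_simps scaleR_conv_of_real flip: cis_mult)
  then have "cmod (cis (\<psi> + t) - cis \<theta> - t *\<^sub>R (\<i> * cis \<theta>))
      \<le> cmod (cis (\<psi> + t) - cis (\<theta> + t)) + cmod (cis \<theta> * (cis t - 1 - \<i> * t))"
    by (simp only: norm_triangle_ineq)
  also have "\<dots> = cmod (cis (\<psi> + t) - cis (\<theta> + t)) + cmod (cis t - 1 - \<i> * t)"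
    by (simp add: norm_mult)
  also have "\<dots> \<le> \<bar>\<theta> - \<psi>\<bar> + t\<^sup>2"
    using norm_cis_diff_le[of "\<psi> + t" "\<theta> + t"] norm_cis_taylor_le[of t] by simp
  finally show ?thesis .
qed

lemma norm_integral_cis_remainder_le:
  assumes \<theta>: "\<theta> \<in> borel_measurable lborel_2pi" and \<psi>: "\<psi> \<in> borel_measurable lborel_2pi"
    and d_int: "integrable lborel_2pi (\<lambda>s. \<bar>\<theta> s - \<psi> s\<bar>)" and w: "sq_integrable lborel_2pi w"
  shows "cmod ((\<integral>s. cis (\<psi> s + w s) \<partial>lborel_2pi) - (\<integral>s. cis (\<theta> s) \<partial>lborel_2pi)
      - (\<integral>s. w s *\<^sub>R (\<i> * cis (\<theta> s)) \<partial>lborel_2pi))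
    \<le> (\<integral>s. \<bar>\<theta> s - \<psi> s\<bar> \<partial>lborel_2pi) + (\<integral>s. (w s)\<^sup>2 \<partial>lborel_2pi)"
proof -
  have w_meas: "w \<in> borel_measurable lborel_2pi" and w2: "integrable lborel_2pi (\<lambda>s. (w s)\<^sup>2)"
    and w_int: "integrable lborel_2pi w"
    using w lborel_2pi.square_integrable_imp_integrable unfolding sq_integrable_def by auto
  have cis_int: "integrable lborel_2pi (\<lambda>s. cis (\<psi> s + w s))" "integrable lborel_2pi (\<lambda>s. cis (\<theta> s))"
    and i_int: "integrable lborel_2pi (\<lambda>s. w s *\<^sub>R (\<i> * cis (\<theta> s)))"
    using \<theta> \<psi> w_meas w_int by (auto intro: integrable_cis_comp integrable_scaleR_i_cis)
  then have "(\<integral>s. cis (\<psi> s + w s) \<partial>lborel_2pi) - (\<integral>s. cis (\<theta> s) \<partial>lborel_2pi)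
      - (\<integral>s. w s *\<^sub>R (\<i> * cis (\<theta> s)) \<partial>lborel_2pi)
      = (\<integral>s. cis (\<psi> s + w s) - cis (\<theta> s) - w s *\<^sub>R (\<i> * cis (\<theta> s)) \<partial>lborel_2pi)"
    by simp
  also have "cmod \<dots> \<le> (\<integral>s. \<bar>\<theta> s - \<psi> s\<bar> + (w s)\<^sup>2 \<partial>lborel_2pi)"
    using cis_int i_int d_int w2 cis_linearization_le
    by (intro Bochner_Integration.integral_norm_bound_integral) auto
  finally show ?thesis
    using d_int w2 by simp
qed

lemma constraint_map_remainder_le:
  assumes \<theta>: "\<theta> \<in> M_set" and w: "w \<in> trig_poly"
    and \<psi>: "\<psi> \<in> borel_measurable lborel_2pi" "integrable lborel_2pi \<psi>"
  shows "norm (constraint_map (\<lambda>s. \<psi> s + w s) - constraint_map \<theta> - constraint_deriv \<theta> w)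
    \<le> 2 * (\<integral>s. \<bar>\<theta> s - \<psi> s\<bar> \<partial>lborel_2pi) + (\<integral>s. (w s)\<^sup>2 \<partial>lborel_2pi)"
proof -
  have \<theta>_meas: "\<theta> \<in> borel_measurable lborel_2pi" and \<theta>_int: "integrable lborel_2pi \<theta>"
    using \<theta> lborel_2pi.square_integrable_imp_integrable
    unfolding M_set_iff_constraint_map sq_integrable_def by auto
  have d_int: "integrable lborel_2pi (\<lambda>s. \<bar>\<theta> s - \<psi> s\<bar>)"
    using \<theta>_int \<psi>(2) by auto
  have eq: "(\<integral>s. \<psi> s + w s \<partial>lborel_2pi) - (\<integral>s. \<theta> s \<partial>lborel_2pi) - (\<integral>s. w s \<partial>lborel_2pi)
      = (\<integral>s. \<psi> s - \<theta> s \<partial>lborel_2pi)"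
    using \<theta>_int \<psi>(2) integrable_trig_poly[OF w] by simp
  have "norm (\<integral>s. \<psi> s - \<theta> s \<partial>lborel_2pi) \<le> (\<integral>s. \<bar>\<theta> s - \<psi> s\<bar> \<partial>lborel_2pi)"
    by (rule Bochner_Integration.integral_norm_bound_integral) (use \<theta>_int \<psi>(2) d_int in auto)
  then have fst_le: "norm ((\<integral>s. \<psi> s + w s \<partial>lborel_2pi) - (\<integral>s. \<theta> s \<partial>lborel_2pi) - (\<integral>s. w s \<partial>lborel_2pi))
      \<le> (\<integral>s. \<bar>\<theta> s - \<psi> s\<bar> \<partial>lborel_2pi)"
    unfolding eq .
  have "norm (constraint_map (\<lambda>s. \<psi> s + w s) - constraint_map \<theta> - constraint_deriv \<theta> w)
      \<le> norm ((\<integral>s. \<psi> s + w s \<partial>lborel_2pi) - (\<integral>s. \<theta> s \<partial>lborel_2pi) - (\<integral>s. w s \<partial>lborel_2pi))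
        + norm ((\<integral>s. cis (\<psi> s + w s) \<partial>lborel_2pi) - (\<integral>s. cis (\<theta> s) \<partial>lborel_2pi)
        - (\<integral>s. w s *\<^sub>R (\<i> * cis (\<theta> s)) \<partial>lborel_2pi))"
    unfolding constraint_map_def constraint_deriv_def by (simp only: diff_Pair norm_Pair_le)
  with fst_le norm_integral_cis_remainder_le[OF \<theta>_meas \<psi>(1) d_int sq_integrable_trig_poly[OF w]]
  show ?thesis
    by simp
qed

lemma dist_constraint_map_le:
  assumes \<psi>: "\<psi> \<in> borel_measurable lborel_2pi" "integrable lborel_2pi \<psi>"
    and v: "integrable lborel_2pi v" and w: "integrable lborel_2pi w"
  shows "dist (constraint_map (\<lambda>s. \<psi> s + v s)) (constraint_map (\<lambda>s. \<psi> s + w s))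
    \<le> 2 * (\<integral>s. \<bar>v s - w s\<bar> \<partial>lborel_2pi)"
proof -
  note [measurable] = \<psi>(1) borel_measurable_integrable[OF v] borel_measurable_integrable[OF w]
  have d_int: "integrable lborel_2pi (\<lambda>s. \<bar>v s - w s\<bar>)"
    using v w by auto
  have cis_int: "integrable lborel_2pi (\<lambda>s. cis (\<psi> s + u s))" if "u \<in> borel_measurable lborel_2pi" for u
    using that \<psi>(1) by (intro integrable_cis_comp borel_measurable_add)
  have "(\<integral>s. \<psi> s + v s \<partial>lborel_2pi) - (\<integral>s. \<psi> s + w s \<partial>lborel_2pi) = (\<integral>s. v s - w s \<partial>lborel_2pi)"
    using \<psi>(2) v w by simp
  then have "\<bar>(\<integral>s. \<psi> s + v s \<partial>lborel_2pi) - (\<integral>s. \<psi> s + w s \<partial>lborel_2pi)\<bar> \<le> (\<integral>s. \<bar>v s - w s\<bar> \<partial>lborel_2pi)"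
    using Bochner_Integration.integral_norm_bound_integral[of lborel_2pi "\<lambda>s. v s - w s"] v w d_int
    by simp
  moreover have "(\<integral>s. cis (\<psi> s + v s) \<partial>lborel_2pi) - (\<integral>s. cis (\<psi> s + w s) \<partial>lborel_2pi)
      = (\<integral>s. cis (\<psi> s + v s) - cis (\<psi> s + w s) \<partial>lborel_2pi)"
    using cis_int by simp
  moreover have "cmod \<dots> \<le> (\<integral>s. \<bar>v s - w s\<bar> \<partial>lborel_2pi)"
  proof (rule Bochner_Integration.integral_norm_bound_integral)
    show "cmod (cis (\<psi> s + v s) - cis (\<psi> s + w s)) \<le> \<bar>v s - w s\<bar>" for s
      using norm_cis_diff_le[of "\<psi> s + v s" "\<psi> s + w s"] by simp
  qed (use cis_int d_int in auto)
  ultimately have "norm ((\<integral>s. \<psi> s + v s \<partial>lborel_2pi) - (\<integral>s. \<psi> s + w s \<partial>lborel_2pi))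
      + cmod ((\<integral>s. cis (\<psi> s + v s) \<partial>lborel_2pi) - (\<integral>s. cis (\<psi> s + w s) \<partial>lborel_2pi))
      \<le> 2 * (\<integral>s. \<bar>v s - w s\<bar> \<partial>lborel_2pi)"
    by simp
  then show ?thesis
    unfolding dist_norm constraint_map_def diff_Pair by (rule order.trans[OF norm_Pair_le])
qed

lemma continuous_on_constraint_map_right_inverse:
  assumes \<tau>: "bounded_right_inverse \<theta> B \<tau>"
    and \<psi>: "\<psi> \<in> borel_measurable lborel_2pi" "integrable lborel_2pi \<psi>"
  shows "continuous_on A (\<lambda>t. constraint_map (\<lambda>s. \<psi> s + \<tau> t s))"
proof (rule lipschitz_on_continuous_on[OF lipschitz_onI])
  have \<tau>_int: "integrable lborel_2pi (\<tau> t)" for t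
    using integrable_trig_poly[OF bounded_right_inverseD(1)[OF \<tau>]] .
  fix t t'
  have "dist (constraint_map (\<lambda>s. \<psi> s + \<tau> t s)) (constraint_map (\<lambda>s. \<psi> s + \<tau> t' s))
      \<le> 2 * (\<integral>s. \<bar>\<tau> (t - t') s\<bar> \<partial>lborel_2pi)"
    using dist_constraint_map_le[OF \<psi> \<tau>_int \<tau>_int] by (simp add: bounded_right_inverseD(2)[OF \<tau>])
  also have "\<dots> \<le> 2 * (\<integral>s. B * dist t t' \<partial>lborel_2pi)"
    using bounded_right_inverseD(3)[OF \<tau>, of "t - t'"] \<tau>_int
    by (intro mult_left_mono integral_mono) (auto simp: dist_norm)
  also have "\<dots> = 4 * pi * B * dist t t'"
    by simp
  also have "\<dots> \<le> \<bar>4 * pi * B\<bar> * dist t t'"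
    by (intro mult_right_mono) auto
  finally show "dist (constraint_map (\<lambda>s. \<psi> s + \<tau> t s)) (constraint_map (\<lambda>s. \<psi> s + \<tau> t' s))
      \<le> \<bar>4 * pi * B\<bar> * dist t t'" .
qed simp

lemma integral_sq_right_inverse_le:
  assumes \<tau>: "bounded_right_inverse \<theta> B \<tau>" and t: "norm t \<le> r"
  shows "(\<integral>s. (\<tau> t s)\<^sup>2 \<partial>lborel_2pi) \<le> 2 * pi * B\<^sup>2 * r\<^sup>2"
proof -
  have "B * norm t \<le> \<bar>B\<bar> * norm t"
    by (rule mult_right_mono) simp_all
  also have "\<dots> \<le> \<bar>B\<bar> * r"
    using t by (intro mult_left_mono) simp_all
  finally have "\<bar>\<tau> t s\<bar> \<le> \<bar>B\<bar> * r" for s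
    by (rule order.trans[OF bounded_right_inverseD(3)[OF \<tau>]])
  then have "(\<integral>s. (\<tau> t s)\<^sup>2 \<partial>lborel_2pi) \<le> 2 * pi * (\<bar>B\<bar> * r)\<^sup>2"
    by (rule integral_sq_le_of_abs_le[OF sq_integrable_trig_poly[OF bounded_right_inverseD(1)[OF \<tau>]]])
  then show ?thesis
    by (simp add: power_mult_distrib)
qed

text \<open>Since \<open>\<tau>\<close> inverts the derivative of the constraint map \<open>F\<close>, the map
  \<open>t \<mapsto> t - (F (\<psi> + \<tau> t) - F \<theta>)\<close> is minus a Taylor remainder and sends a small ball into itself;
  its fixed points solve the constraints.\<close>

lemma constraint_correction:
  assumes \<theta>: "\<theta> \<in> M_set" and \<tau>: "bounded_right_inverse \<theta> B \<tau>"
    and \<psi>: "\<psi> \<in> borel_measurable lborel_2pi" "integrable lborel_2pi \<psi>"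
    and r: "r > 0" "4 * pi * B\<^sup>2 * r \<le> 1"
    and close: "(\<integral>s. \<bar>\<theta> s - \<psi> s\<bar> \<partial>lborel_2pi) \<le> r / 4"
  obtains t where "norm t \<le> r" "constraint_map (\<lambda>s. \<psi> s + \<tau> t s) = (2 * pi\<^sup>2, 0)"
proof -
  have \<theta>_map: "constraint_map \<theta> = (2 * pi\<^sup>2, 0)"
    using \<theta> by (simp add: M_set_iff_constraint_map)
  define G where "G t = t - (constraint_map (\<lambda>s. \<psi> s + \<tau> t s) - constraint_map \<theta>)" for t
  have "continuous_on (cball 0 r) (\<lambda>t. constraint_map (\<lambda>s. \<psi> s + \<tau> t s))"
    by (rule continuous_on_constraint_map_right_inverse[OF \<tau> \<psi>])
  then have cont: "continuous_on (cball 0 r) G"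
    unfolding G_def by (intro continuous_on_diff continuous_on_id continuous_on_const)
  have maps: "G \<in> cball 0 r \<rightarrow> cball 0 r"
  proof
    fix t :: "real \<times> complex" assume "t \<in> cball 0 r"
    then have "(\<integral>s. (\<tau> t s)\<^sup>2 \<partial>lborel_2pi) \<le> (r / 2) * (4 * pi * B\<^sup>2 * r)"
      using integral_sq_right_inverse_le[OF \<tau>, of t r] by (simp add: power2_eq_square mult_ac)
    also have "\<dots> \<le> r / 2"
      using mult_left_mono[OF r(2), of "r / 2"] r(1) by simp
    finally have small: "(\<integral>s. (\<tau> t s)\<^sup>2 \<partial>lborel_2pi) \<le> r / 2" .
    have "norm (G t) = norm (constraint_map (\<lambda>s. \<psi> s + \<tau> t s) - constraint_map \<theta> - constraint_deriv \<theta> (\<tau> t))"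
      unfolding G_def bounded_right_inverseD(4)[OF \<tau>] by (simp add: norm_minus_commute)
    also have "\<dots> \<le> r"
      using constraint_map_remainder_le[OF \<theta> bounded_right_inverseD(1)[OF \<tau>] \<psi>, of t] close small
      by simp
    finally show "G t \<in> cball 0 r"
      by simp
  qed
  obtain t where "t \<in> cball 0 r" "G t = t"
    using brouwer_ball[OF r(1) cont maps] by blast
  then show thesis
    using \<theta>_map by (intro that[of t]) (simp_all add: G_def)
qed

lemma smooth_index_setI:
  assumes "G \<in> trig_poly" "constraint_map (\<lambda>s. of_int h * s + G s) = (2 * pi\<^sup>2, 0)"
  shows "(\<lambda>s. of_int h * s + G s) \<in> smooth_index_set h"
proof -
  have "sq_integrable lborel_2pi (\<lambda>s. of_int h * s + G s)"
    using assms(1) by (intro sq_integrable_add sq_integrable_continuous_on sq_integrable_trig_poly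
        continuous_intros)
  with assms show ?thesis
    unfolding smooth_index_set_def M_set_iff_constraint_map
    by (auto intro!: exI[of _ G] smooth_real_trig_poly trig_poly_periodic)
qed

lemma smooth_index_approximation:
  assumes \<theta>: "\<theta> \<in> M_set" and \<tau>: "bounded_right_inverse \<theta> B \<tau>" and g: "g \<in> trig_poly"
    and r: "r > 0" "4 * pi * B\<^sup>2 * r \<le> 1"
    and close: "(\<integral>s. (\<theta> s - of_int h * s - g s)\<^sup>2 \<partial>lborel_2pi) \<le> r\<^sup>2 / (32 * pi)"
  obtains \<eta> where "\<eta> \<in> smooth_index_set h"
    "(\<integral>s. (\<theta> s - \<eta> s)\<^sup>2 \<partial>lborel_2pi) \<le> 2 * (\<integral>s. (\<theta> s - of_int h * s - g s)\<^sup>2 \<partial>lborel_2pi) + r"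
proof -
  define \<psi> where "\<psi> s = of_int h * s + g s" for s
  have \<theta>_sq: "sq_integrable lborel_2pi \<theta>"
    using \<theta> by (simp add: M_set_iff_constraint_map)
  have \<psi>_sq: "sq_integrable lborel_2pi \<psi>"
    unfolding \<psi>_def using g by (intro sq_integrable_add sq_integrable_continuous_on
        sq_integrable_trig_poly continuous_intros)
  then have \<psi>: "\<psi> \<in> borel_measurable lborel_2pi" "integrable lborel_2pi \<psi>"
    using lborel_2pi.square_integrable_imp_integrable unfolding sq_integrable_def by auto
  have dist_eq: "(\<lambda>s. (\<theta> s - \<psi> s)\<^sup>2) = (\<lambda>s. (\<theta> s - of_int h * s - g s)\<^sup>2)"
    by (simp add: \<psi>_def algebra_simps)
  have "(\<integral>s. \<bar>\<theta> s - \<psi> s\<bar> \<partial>lborel_2pi) \<le> r / 4"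
    using close r(1) unfolding dist_eq[symmetric]
    by (intro integral_abs_le_of_integral_sq_le sq_integrable_diff[OF \<theta>_sq \<psi>_sq])
  then obtain t where t: "norm t \<le> r" "constraint_map (\<lambda>s. \<psi> s + \<tau> t s) = (2 * pi\<^sup>2, 0)"
    using constraint_correction[OF \<theta> \<tau> \<psi> r] by blast
  have \<tau>_trig: "\<tau> t \<in> trig_poly"
    by (rule bounded_right_inverseD(1)[OF \<tau>])
  show thesis
  proof (rule that)
    show "(\<lambda>s. \<psi> s + \<tau> t s) \<in> smooth_index_set h"
      using smooth_index_setI[OF trig_poly_add[OF g \<tau>_trig], of h] t(2) by (simp add: \<psi>_def add.assoc)
    have "(\<integral>s. (\<theta> s - (\<psi> s + \<tau> t s))\<^sup>2 \<partial>lborel_2pi)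
        \<le> 2 * (\<integral>s. (\<theta> s - \<psi> s)\<^sup>2 \<partial>lborel_2pi) + 2 * (\<integral>s. (\<psi> s - (\<psi> s + \<tau> t s))\<^sup>2 \<partial>lborel_2pi)"
      by (rule sq_dist_triangle[OF \<theta>_sq \<psi>_sq sq_integrable_add[OF \<psi>_sq sq_integrable_trig_poly[OF \<tau>_trig]]])
    also have "\<dots> \<le> 2 * (\<integral>s. (\<theta> s - \<psi> s)\<^sup>2 \<partial>lborel_2pi) + 2 * (2 * pi * B\<^sup>2 * r\<^sup>2)"
      using integral_sq_right_inverse_le[OF \<tau> t(1)] by simp
    also have "\<dots> \<le> 2 * (\<integral>s. (\<theta> s - \<psi> s)\<^sup>2 \<partial>lborel_2pi) + r"
      using mult_left_mono[OF r(2), of r] r(1) by (simp add: power2_eq_square algebra_simps)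
    finally show "(\<integral>s. (\<theta> s - (\<psi> s + \<tau> t s))\<^sup>2 \<partial>lborel_2pi)
        \<le> 2 * (\<integral>s. (\<theta> s - of_int h * s - g s)\<^sup>2 \<partial>lborel_2pi) + r"
      unfolding dist_eq by (simp add: \<psi>_def)
  qed
qed

lemma small_multiplier_exists:
  fixes a e :: real
  assumes "a \<ge> 0" "e > 0"
  obtains r where "r > 0" "a * r \<le> 1" "r < e"
proof -
  obtain r where r: "r > 0" "r < 1 / (a + 1)" "r < e"
    using field_lbound_gt_zero[of "1 / (a + 1)" e] assms by auto
  then have "a * r \<le> (a + 1) * r"
    by simp
  also have "\<dots> \<le> 1"
    using r(2) assms(1) by (simp add: pos_less_divide_eq mult.commute)
  finally show thesis
    using r that by blast
qed

theorem mainTheorem16: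
  fixes h :: int
  shows "\<forall>\<theta> \<in> M_set - Z_set. \<forall>\<epsilon>>0. \<exists>\<eta> \<in> smooth_index_set h. L2_dist \<theta> \<eta> < \<epsilon>"
proof (intro ballI allI impI)
  fix \<theta> and \<epsilon> :: real assume \<theta>: "\<theta> \<in> M_set - Z_set" and "\<epsilon> > 0"
  obtain B \<tau> where \<tau>: "bounded_right_inverse \<theta> B \<tau>"
    using bounded_right_inverse_exists \<theta> by blast
  obtain r where r: "r > 0" "4 * pi * B\<^sup>2 * r \<le> 1" "r < \<epsilon>\<^sup>2 / 2"
    using small_multiplier_exists[of "4 * pi * B\<^sup>2" "\<epsilon>\<^sup>2 / 2"] \<open>\<epsilon> > 0\<close> by auto
  have "sq_integrable lborel_2pi \<theta>"
    using \<theta> by (simp add: M_set_iff_constraint_map)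
  then have "sq_integrable lborel_2pi (\<lambda>s. \<theta> s - of_int h * s)"
    by (rule sq_integrable_diff) (intro sq_integrable_continuous_on continuous_intros)
  moreover have "min (\<epsilon>\<^sup>2 / 4) (r\<^sup>2 / (32 * pi)) > 0"
    using \<open>\<epsilon> > 0\<close> r(1) by simp
  ultimately obtain g where g: "g \<in> trig_poly"
      "(\<integral>s. (\<theta> s - of_int h * s - g s)\<^sup>2 \<partial>lborel_2pi) < min (\<epsilon>\<^sup>2 / 4) (r\<^sup>2 / (32 * pi))"
    using approximable_trig_poly unfolding l2_approximable_def by blast
  then have close: "(\<integral>s. (\<theta> s - of_int h * s - g s)\<^sup>2 \<partial>lborel_2pi) < \<epsilon>\<^sup>2 / 4"
    "(\<integral>s. (\<theta> s - of_int h * s - g s)\<^sup>2 \<partial>lborel_2pi) \<le> r\<^sup>2 / (32 * pi)"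
    by simp_all
  with \<theta> obtain \<eta> where \<eta>: "\<eta> \<in> smooth_index_set h"
      "(\<integral>s. (\<theta> s - \<eta> s)\<^sup>2 \<partial>lborel_2pi) \<le> 2 * (\<integral>s. (\<theta> s - of_int h * s - g s)\<^sup>2 \<partial>lborel_2pi) + r"
    using smooth_index_approximation[OF _ \<tau> g(1) r(1,2)] by blast
  with close(1) r(3) have "(\<integral>s. (\<theta> s - \<eta> s)\<^sup>2 \<partial>lborel_2pi) < \<epsilon>\<^sup>2"
    by linarith
  then have "L2_dist \<theta> \<eta> < \<epsilon>"
    using real_sqrt_less_mono \<open>\<epsilon> > 0\<close> unfolding L2_dist_eq_sqrt_integral by fastforce
  with \<eta>(1) show "\<exists>\<eta>\<in>smooth_index_set h. L2_dist \<theta> \<eta> < \<epsilon>"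
    by blast
qed

end
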